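(* Let $\mathcal P$ be a set of pre-tangles in a graph $G$, let $N$ be a nested set of separations of $G$ which efficiently distinguishes $\mathcal P$, and let $(\vec s_i)_{i\in\mathbb N}$ be a strictly increasing sequence of orientations of separations in $N$. If $(\vec s_i)_i$ is strongly $\mathcal P$-relevant, then there is a sequence $(P_i)_{i\in\mathbb N}$ in $\mathcal P$ such that for all $i\in\mathbb N$: $\overleftarrow{s}_i\in P_i$, $\vec s_i\in P_{i+1}$, and $s_i$ efficiently distinguishes $P_i$ and $P_{i+1}$.
   Context: Notation: $s$ denotes a separation (an unordered pair $\{A,B\}$ of subsets of $V(G)$ with $A\cup B=V(G)$ and no edge between $A\setminus B$ and $B\setminus A$; order $|s|=|A\cap B|$), $\vec s,\overleftarrow{s}$ its two orientations; oriented separations are ordered by $(A,B)\le(C,D)$ iff $A\subseteq C$ and $B\supseteq D$. Nested: some orientations comparable. A set $O$ of oriented separations is consistent if there are no $(A,B),(C,D)\in O$ with $\{A,B\}\ne\{C,D\}$ and $(B,A)\le(C,D)$. A pre-tangle is a consistent set $P$ which, for some $k\in\mathbb N\cup\{\aleph_0\}$, contains exactly one orientation of every separation of order $<k$ and nothing else. A separation distinguishes two pre-tangles if both contain an orientation of it but different ones; efficiently if of minimum order among such. $N$ efficiently distinguishes $\mathcal P$ if any two pre-tangles in $\mathcal P$ distinguished by some separation are efficiently distinguished by an element of $N$. A pair $\vec s<\vec t$ is strongly $\mathcal P$-relevant if there are $O,P,Q\in\mathcal P$ such that $s$ efficiently distinguishes $O$ and $P$ with $\vec s\in P$, and $t$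 efficiently distinguishes $P$ and $Q$ with $\overleftarrow{t}\in P$. A strictly increasing sequence $(\vec s_i)$ is strongly $\mathcal P$-relevant if each pair $\vec s_i<\vec s_{i+1}$ is. *)

theory Defs
  imports Main "HOL-Library.Extended_Nat"
begin

definition graph :: "'v set \<Rightarrow> ('v \<Rightarrow> 'v \<Rightarrow> bool) \<Rightarrow> bool" where
  "graph V E \<longleftrightarrow> (\<forall>x y. E x y \<longrightarrow> x \<in> V \<and> y \<in> V \<and> E y x \<and> x \<noteq> y)"

type_synonym 'v osep = "'v set \<times> 'v set"
type_synonym 'v sep = "'v osep set"

definition is_osep :: "'v set \<Rightarrow> ('v \<Rightarrow> 'v \<Rightarrow> bool) \<Rightarrow> 'v osep \<Rightarrow> bool" where
  "is_osep V E x \<longleftrightarrow> (fst x \<union> snd x = V \<and>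
     (\<forall>a \<in> fst x - snd x. \<forall>b \<in> snd x - fst x. \<not> E a b \<and> \<not> E b a))"

definition inv_osep :: "'v osep \<Rightarrow> 'v osep" where
  "inv_osep x = (snd x, fst x)"

text \<open>The unoriented separation {A,B} is represented by the set of its two orientations.\<close>
definition sep_of :: "'v osep \<Rightarrow> 'v sep" where
  "sep_of x = {x, inv_osep x}"

definition is_sep :: "'v set \<Rightarrow> ('v \<Rightarrow> 'v \<Rightarrow> bool) \<Rightarrow> 'v sep \<Rightarrow> bool" where
  "is_sep V E s \<longleftrightarrow> (\<exists>x. is_osep V E x \<and> s = sep_of x)"

definition osep_order :: "'v osep \<Rightarrow> enat" where
  "osep_order x = (if finite (fst x \<inter> snd x) then enat (card (fst x \<inter> snd x)) else \<infinity>)"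

definition sep_order :: "'v sep \<Rightarrow> enat" where
  "sep_order s = (THE k. \<exists>x \<in> s. k = osep_order x)"

definition osep_le :: "'v osep \<Rightarrow> 'v osep \<Rightarrow> bool" where
  "osep_le x y \<longleftrightarrow> fst x \<subseteq> fst y \<and> snd y \<subseteq> snd x"

definition osep_less :: "'v osep \<Rightarrow> 'v osep \<Rightarrow> bool" where
  "osep_less x y \<longleftrightarrow> osep_le x y \<and> x \<noteq> y"

definition nested :: "'v sep \<Rightarrow> 'v sep \<Rightarrow> bool" where
  "nested s t \<longleftrightarrow> (\<exists>x \<in> s. \<exists>y \<in> t. osep_le x y \<or> osep_le y x)"

definition nested_set :: "'v sep set \<Rightarrow> bool" where
  "nested_set N \<longleftrightarrow> (\<forall>s \<in> N. \<forall>t \<in> N. nested s t)"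

definition consistent :: "'v osep set \<Rightarrow> bool" where
  "consistent S \<longleftrightarrow> \<not> (\<exists>x \<in> S. \<exists>y \<in> S. sep_of x \<noteq> sep_of y \<and> osep_le (inv_osep x) y)"

text \<open>Pre-tangle: consistent, and for some k \<in> \<nat> \<union> {aleph0} (here enat, \<infinity> = aleph0) contains
  exactly one orientation of every separation of order < k and nothing else.\<close>
definition pre_tangle :: "'v set \<Rightarrow> ('v \<Rightarrow> 'v \<Rightarrow> bool) \<Rightarrow> 'v osep set \<Rightarrow> bool" where
  "pre_tangle V E P \<longleftrightarrow> consistent P \<and>
     (\<exists>k::enat. (\<forall>x \<in> P. is_osep V E x \<and> osep_order x < k) \<and>
        (\<forall>s. is_sep V E s \<and> sep_order s < k \<longrightarrow> card (s \<inter> P) = 1))"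

definition distinguishes :: "'v set \<Rightarrow> ('v \<Rightarrow> 'v \<Rightarrow> bool) \<Rightarrow> 'v sep \<Rightarrow> 'v osep set \<Rightarrow> 'v osep set \<Rightarrow> bool" where
  "distinguishes V E s P Q \<longleftrightarrow> is_sep V E s \<and>
     (\<exists>x \<in> s. \<exists>y \<in> s. x \<in> P \<and> y \<in> Q \<and> x \<noteq> y)"

definition eff_distinguishes :: "'v set \<Rightarrow> ('v \<Rightarrow> 'v \<Rightarrow> bool) \<Rightarrow> 'v sep \<Rightarrow> 'v osep set \<Rightarrow> 'v osep set \<Rightarrow> bool" where
  "eff_distinguishes V E s P Q \<longleftrightarrow> distinguishes V E s P Q \<and>
     (\<forall>t. distinguishes V E t P Q \<longrightarrow> sep_order s \<le> sep_order t)"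

definition set_eff_distinguishes :: "'v set \<Rightarrow> ('v \<Rightarrow> 'v \<Rightarrow> bool) \<Rightarrow> 'v sep set \<Rightarrow> 'v osep set set \<Rightarrow> bool" where
  "set_eff_distinguishes V E N \<P> \<longleftrightarrow> (\<forall>P \<in> \<P>. \<forall>Q \<in> \<P>.
     (\<exists>s. distinguishes V E s P Q) \<longrightarrow> (\<exists>s \<in> N. eff_distinguishes V E s P Q))"

definition strongly_relevant_pair :: "'v set \<Rightarrow> ('v \<Rightarrow> 'v \<Rightarrow> bool) \<Rightarrow> 'v osep set set \<Rightarrow> 'v osep \<Rightarrow> 'v osep \<Rightarrow> bool" where
  "strongly_relevant_pair V E \<P> x y \<longleftrightarrow> osep_less x y \<and>
     (\<exists>R \<in> \<P>. \<exists>P \<in> \<P>. \<exists>Q \<in> \<P>.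
        eff_distinguishes V E (sep_of x) R P \<and> x \<in> P \<and>
        eff_distinguishes V E (sep_of y) P Q \<and> inv_osep y \<in> P)"

definition strongly_relevant_seq :: "'v set \<Rightarrow> ('v \<Rightarrow> 'v \<Rightarrow> bool) \<Rightarrow> 'v osep set set \<Rightarrow> (nat \<Rightarrow> 'v osep) \<Rightarrow> bool" where
  "strongly_relevant_seq V E \<P> f \<longleftrightarrow> (\<forall>i. strongly_relevant_pair V E \<P> (f i) (f (Suc i)))"

end

theory Submission
  imports Defs
begin

text \<open>
  For each i, strong relevance of the pair s_i < s_(i+1) provides pre-tangles R_i, M_i, Q_i
  with s_i efficiently distinguishing R_i from M_i (s_i \<in> M_i) and s_(i+1) efficiently
  distinguishing M_i from Q_i (s_(i+1) reversed in M_i). The sequence R_0, M_0, M_1, \<dots> works; the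
  only point is that s_(i+1) efficiently distinguishes M_i from M_(i+1). Below the order of
  s_(i+1), M_i agrees with Q_i and M_(i+1) agrees with R_(i+1), so a cheaper separation
  distinguishing M_i and M_(i+1) would make N contain a cheaper separation u distinguishing
  Q_i and R_(i+1). Then the four pre-tangles realise all four combinations of orientations
  of u and s_(i+1), which by consistency forces u and s_(i+1) to cross, contradicting
  nestedness of N.
\<close>

lemma inv_osep_inv_osep [simp]: "inv_osep (inv_osep x) = x"
  by (simp add: inv_osep_def)

lemma sep_of_inv_osep [simp]: "sep_of (inv_osep x) = sep_of x"
  by (auto simp: sep_of_def)

lemma osep_order_inv_osep [simp]: "osep_order (inv_osep x) = osep_order x"
  by (simp add: osep_order_def inv_osep_def Int_commute)

lemma sep_order_sep_of [simp]: "sep_order (sep_of x) = osep_order x"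
  unfolding sep_order_def sep_of_def by auto

lemma mem_sep_of_iff: "y \<in> sep_of x \<longleftrightarrow> y = x \<or> y = inv_osep x"
  by (simp add: sep_of_def)

lemma distinguishes_commute: "distinguishes V E t A B \<longleftrightarrow> distinguishes V E t B A"
  unfolding distinguishes_def by blast

lemma distinguishesE:
  assumes "distinguishes V E t A B"
  obtains a where "t = sep_of a" "inv_osep a \<in> A" "a \<in> B"
proof -
  obtain x y where xy: "x \<in> t" "y \<in> t" "x \<in> A" "y \<in> B" "x \<noteq> y" and "is_sep V E t"
    using assms unfolding distinguishes_def by blast
  then obtain z where "t = sep_of z"
    unfolding is_sep_def by blast
  with xy have "t = sep_of y" "x = inv_osep y"
    by (auto simp: mem_sep_of_iff)
  with xy show thesis
    using that by blast
qed

lemma distinguishes_sep_of_neq: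
  "distinguishes V E (sep_of s) A B \<Longrightarrow> inv_osep s \<noteq> s"
  unfolding distinguishes_def by (auto simp: mem_sep_of_iff)

lemma pre_tangle_card_sep_inter:
  assumes "pre_tangle V E Z" "z \<in> Z" "is_sep V E t" "sep_order t \<le> osep_order z"
  shows "card (t \<inter> Z) = 1"
proof -
  obtain k where k: "\<forall>x \<in> Z. is_osep V E x \<and> osep_order x < k"
    "\<forall>s. is_sep V E s \<and> sep_order s < k \<longrightarrow> card (s \<inter> Z) = 1"
    using assms(1) unfolding pre_tangle_def by blast
  have "sep_order t < k"
    using k(1) assms(2,4) by (meson order.strict_trans1)
  with k(2) assms(3) show ?thesis
    by blast
qed

lemma distinguishes_orientation:
  assumes "distinguishes V E (sep_of s) A B" "pre_tangle V E B" "s \<in> B"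
  shows "inv_osep s \<in> A"
proof -
  have "is_sep V E (sep_of s)"
    using assms(1) unfolding distinguishes_def by blast
  then have "card (sep_of s \<inter> B) = 1"
    using pre_tangle_card_sep_inter[OF assms(2,3)] by simp
  then obtain z where "sep_of s \<inter> B = {z}"
    by (rule card_1_singletonE)
  with assms(3) have single: "sep_of s \<inter> B = {s}"
    by (auto simp: sep_of_def)
  obtain a where "sep_of s = sep_of a" "inv_osep a \<in> A" "a \<in> B"
    using assms(1) by (rule distinguishesE)
  moreover from this single have "a = s"
    by (auto simp: sep_of_def)
  ultimately show ?thesis
    by simp
qed

lemma distinguishes_iff_orientations_differ:
  assumes "is_sep V E w" "card (w \<inter> A) = 1" "card (w \<inter> B) = 1"
  shows "distinguishes V E w A B \<longleftrightarrow> w \<inter> A \<noteq> w \<inter> B"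
proof -
  obtain x y where "w \<inter> A = {x}" "w \<inter> B = {y}"
    using assms(2,3) by (meson card_1_singletonE)
  with assms(1) show ?thesis
    unfolding distinguishes_def by (metis IntD1 IntD2 IntI singletonD singletonI)
qed

lemma eff_distinguishes_agree_below:
  assumes "eff_distinguishes V E s A B" "is_sep V E w" "sep_order w < sep_order s"
    and "card (w \<inter> A) = 1" "card (w \<inter> B) = 1"
  shows "w \<inter> A = w \<inter> B"
  using assms distinguishes_iff_orientations_differ[OF assms(2,4,5)]
  unfolding eff_distinguishes_def by (meson leD)

lemma all_corners_consistent_imp_not_nested:
  assumes corners: "\<And>x y. x \<in> sep_of s \<Longrightarrow> y \<in> sep_of a \<Longrightarrow>
      \<exists>C. consistent C \<and> x \<in> C \<and> y \<in> C"
    and "sep_of s \<noteq> sep_of a"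
  shows "\<not> nested (sep_of s) (sep_of a)"
proof
  assume "nested (sep_of s) (sep_of a)"
  then obtain x y where xy: "x \<in> sep_of s" "y \<in> sep_of a" "osep_le x y \<or> osep_le y x"
    unfolding nested_def by blast
  have sep_x: "sep_of x = sep_of s" and sep_y: "sep_of y = sep_of a"
    using xy(1,2) by (auto simp: mem_sep_of_iff)
  have inv_mem: "inv_osep x \<in> sep_of s" "inv_osep y \<in> sep_of a"
    using xy(1,2) by (auto simp: mem_sep_of_iff)
  show False
    using xy(3)
  proof
    assume "osep_le x y"
    obtain C where "consistent C" "inv_osep x \<in> C" "y \<in> C"
      using corners[OF inv_mem(1) xy(2)] by blast
    with \<open>osep_le x y\<close> assms(2) sep_x sep_y show False
      unfolding consistent_def by (metis inv_osep_inv_osep sep_of_inv_osep)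
  next
    assume "osep_le y x"
    obtain C where "consistent C" "x \<in> C" "inv_osep y \<in> C"
      using corners[OF xy(1) inv_mem(2)] by blast
    with \<open>osep_le y x\<close> assms(2) sep_x sep_y show False
      unfolding consistent_def by (metis inv_osep_inv_osep sep_of_inv_osep)
  qed
qed

lemma eff_distinguishes_recombine:
  assumes PT: "\<forall>Z \<in> \<P>. pre_tangle V E Z" and NS: "\<forall>t \<in> N. is_sep V E t"
    and nest: "nested_set N" and SE: "set_eff_distinguishes V E N \<P>" and sN: "sep_of s \<in> N"
    and in_\<P>: "P \<in> \<P>" "X \<in> \<P>" "Y \<in> \<P>" "P' \<in> \<P>"
    and eff_PX: "eff_distinguishes V E (sep_of s) P X" and "inv_osep s \<in> P"
    and eff_YP': "eff_distinguishes V E (sep_of s) Y P'" and "s \<in> P'"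
  shows "eff_distinguishes V E (sep_of s) P P'"
proof -
  have pt: "pre_tangle V E P" "pre_tangle V E X" "pre_tangle V E Y" "pre_tangle V E P'"
    using PT in_\<P> by auto
  have consistent: "consistent P" "consistent X" "consistent Y" "consistent P'"
    using pt unfolding pre_tangle_def by blast+
  have dist_PX: "distinguishes V E (sep_of s) P X"
    and dist_YP': "distinguishes V E (sep_of s) Y P'"
    using eff_PX eff_YP' unfolding eff_distinguishes_def by blast+
  have "s \<in> X"
    using distinguishes_orientation[of V E "inv_osep s" X P] dist_PX pt(1) \<open>inv_osep s \<in> P\<close>
    by (simp add: distinguishes_commute)
  have "inv_osep s \<in> Y"
    using distinguishes_orientation[OF dist_YP' pt(4) \<open>s \<in> P'\<close>] .
  have dist_PP': "distinguishes V E (sep_of s) P P'"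
    using dist_PX \<open>inv_osep s \<in> P\<close> \<open>s \<in> P'\<close> distinguishes_sep_of_neq[OF dist_PX]
    unfolding distinguishes_def sep_of_def by blast
  have card_below: "card (w \<inter> P) = 1" "card (w \<inter> X) = 1" "card (w \<inter> Y) = 1" "card (w \<inter> P') = 1"
    if "is_sep V E w" "sep_order w < osep_order s" for w
    using pre_tangle_card_sep_inter[OF pt(1) \<open>inv_osep s \<in> P\<close> that(1)]
      pre_tangle_card_sep_inter[OF pt(2) \<open>s \<in> X\<close> that(1)]
      pre_tangle_card_sep_inter[OF pt(3) \<open>inv_osep s \<in> Y\<close> that(1)]
      pre_tangle_card_sep_inter[OF pt(4) \<open>s \<in> P'\<close> that(1)] that(2)
    by simp_all
  have agree_below: "w \<inter> P = w \<inter> X" "w \<inter> Y = w \<inter> P'"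
    if "is_sep V E w" "sep_order w < osep_order s" for w
    using eff_distinguishes_agree_below[OF eff_PX that(1)]
      eff_distinguishes_agree_below[OF eff_YP' that(1)] card_below[OF that] that(2)
    by simp_all
  have "sep_order (sep_of s) \<le> sep_order t" if "distinguishes V E t P P'" for t
  proof (rule ccontr)
    assume "\<not> ?thesis"
    then have t_below: "sep_order t < osep_order s"
      by simp
    have "is_sep V E t"
      using that unfolding distinguishes_def by blast
    then have "distinguishes V E t X Y"
      using that agree_below[OF _ t_below] card_below[OF _ t_below]
      by (metis distinguishes_iff_orientations_differ)
    then obtain u where "u \<in> N" and eff_XY: "eff_distinguishes V E u X Y"
      using SE in_\<P> unfolding set_eff_distinguishes_def by blast
    have "is_sep V E u"
      using NS \<open>u \<in> N\<close> by blast
    have u_below: "sep_order u < osep_order s"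
      using eff_XY \<open>distinguishes V E t X Y\<close> t_below
      unfolding eff_distinguishes_def by (meson order.strict_trans1)
    obtain a where a: "u = sep_of a" "inv_osep a \<in> X" "a \<in> Y"
      using eff_XY unfolding eff_distinguishes_def by (meson distinguishesE)
    have "inv_osep a \<in> P" "a \<in> P'"
      using agree_below[OF \<open>is_sep V E u\<close> u_below] a unfolding sep_of_def by blast+
    have "sep_of s \<noteq> sep_of a"
      using u_below a(1) by (metis less_irrefl sep_order_sep_of)
    moreover have "nested (sep_of s) (sep_of a)"
      using nest sN \<open>u \<in> N\<close> a(1) unfolding nested_set_def by blast
    moreover have "\<exists>C. consistent C \<and> x \<in> C \<and> y \<in> C"
      if "x \<in> sep_of s" "y \<in> sep_of a" for x y
      using that consistent a \<open>s \<in> X\<close> \<open>inv_osep s \<in> Y\<close> \<open>inv_osep s \<in> P\<close>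
        \<open>s \<in> P'\<close> \<open>inv_osep a \<in> P\<close> \<open>a \<in> P'\<close>
      unfolding mem_sep_of_iff by blast
    ultimately show False
      using all_corners_consistent_imp_not_nested by blast
  qed
  with dist_PP' show ?thesis
    unfolding eff_distinguishes_def by blast
qed

theorem mainTheorem14:
  fixes V :: "'v set" and E :: "'v \<Rightarrow> 'v \<Rightarrow> bool"
    and \<P> :: "'v osep set set" and N :: "'v sep set" and s :: "nat \<Rightarrow> 'v osep"
  assumes "graph V E"
    and "\<forall>P \<in> \<P>. pre_tangle V E P"
    and "\<forall>t \<in> N. is_sep V E t"
    and "nested_set N"
    and "set_eff_distinguishes V E N \<P>"
    and "\<forall>i. sep_of (s i) \<in> N"
    and "\<forall>i. osep_less (s i) (s (Suc i))"
    and "strongly_relevant_seq V E \<P> s"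
  shows "\<exists>P :: nat \<Rightarrow> 'v osep set. \<forall>i. P i \<in> \<P> \<and>
           inv_osep (s i) \<in> P i \<and> s i \<in> P (Suc i) \<and>
           eff_distinguishes V E (sep_of (s i)) (P i) (P (Suc i))"
proof -
  obtain R M Q where RMQ: "\<And>i. R i \<in> \<P> \<and> M i \<in> \<P> \<and> Q i \<in> \<P> \<and>
      eff_distinguishes V E (sep_of (s i)) (R i) (M i) \<and> s i \<in> M i \<and>
      eff_distinguishes V E (sep_of (s (Suc i))) (M i) (Q i) \<and> inv_osep (s (Suc i)) \<in> M i"
    using assms(8) unfolding strongly_relevant_seq_def strongly_relevant_pair_def by metis
  have inv_s_R: "inv_osep (s i) \<in> R i" for i
    using RMQ[of i] assms(2) distinguishes_orientation
    unfolding eff_distinguishes_def by blast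
  define P where "P i = (case i of 0 \<Rightarrow> R 0 | Suc j \<Rightarrow> M j)" for i
  have "P i \<in> \<P> \<and> inv_osep (s i) \<in> P i \<and> s i \<in> P (Suc i) \<and>
      eff_distinguishes V E (sep_of (s i)) (P i) (P (Suc i))" for i
  proof (cases i)
    case 0
    then show ?thesis
      using RMQ[of 0] inv_s_R[of 0] by (simp add: P_def)
  next
    case (Suc j)
    have "eff_distinguishes V E (sep_of (s i)) (M j) (M i)"
      using eff_distinguishes_recombine[OF assms(2-5) assms(6)[rule_format, of i]]
        RMQ[of j] RMQ[of i] inv_s_R[of i] Suc by blast
    with Suc RMQ[of j] RMQ[of i] show ?thesis
      by (simp add: P_def)
  qed
  then show ?thesis
    by blast
qed

end
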